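(* Let $[x^{(1)}_k]$ and $[x^{(2)}_k]$ be two zero-mean nonsingular Gaussian Markov sequences over $[0,N]$ that share the same reciprocal model. Then they share the same Markov model if and only if $(R^0_N)^{(1)}=(R^0_N)^{(2)}$, where $(R^0_N)^{(i)}$ is the coefficient $R^0_N$ of the (first-type) reciprocal boundary condition of the $i$-th sequence; equivalently, if and only if $M^{(1)}_N=M^{(2)}_N$.
   Context: $[0,N]=(0,1,\ldots,N)$; $x=[x_0',\ldots,x_N']'$, $C=\mathrm{Cov}(x)$, $'$ denotes transpose; $A_k$ denotes the $(k,k)$ block and $B_k$ the $(k,k+1)$ block of $C^{-1}$. Markov model: a zero-mean nonsingular Gaussian Markov sequence obeys $x_k=M_{k,k-1}x_{k-1}+e^M_k$, $k\in[1,N]$, $x_0=e^M_0$, with $[e^M_k]$ zero-mean white Gaussian, $M_k=\mathrm{Cov}(e^M_k)$; two sequences share the same Markov model if $M_{k,k-1}$ and $M_k$, $k\in[1,N]$, coincide (equivalently their $C^{-1}$ have the same $A_1,\ldots,A_N,B_0,\ldots,B_{N-1}$). Reciprocal model with first-type boundary condition: $R^0_kx_k-R^-_kx_{k-1}-R^+_kx_{k+1}=e^R_k$ for $k\in[1,N-1]$, together with $R^0_0x_0-R^-_0x_N-R^+_0x_1=e^R_0$ and $R^0_Nx_N-R^-_Nx_{N-1}-R^+_Nx_0=e^R_N$, whose coefficients are given by $C^{-1}$: $R^0_k=A_k$ for $k\in[0,N]$, $R^+_k=(R^-_{k+1})'=-B_k$ for $k\in[0,N-1]$, $R^-_0=(R^+_N)'=-D_0$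 where $D_0$ is the $(0,N)$ block. Two sequences share the same reciprocal model if $R^0_k,R^-_k,R^+_k$ for $k\in[1,N-1]$ coincide (equivalently same $A_1,\ldots,A_{N-1},B_0,\ldots,B_{N-1}$). *)

theory Defs
  imports "HOL-Analysis.Analysis"
begin

text \<open>A zero-mean sequence x_0,...,x_N with x_k in R^d (d = CARD('d)) is represented
  by its second-order structure. Block matrices are functions nat => nat => real^'d^'d,
  block (j,k) being the (j,k) block; only indices j,k in [0,N] are meaningful.\<close>

definition blk_inv_of :: "nat \<Rightarrow> (nat \<Rightarrow> nat \<Rightarrow> real^'d^'d) \<Rightarrow> (nat \<Rightarrow> nat \<Rightarrow> real^'d^'d) \<Rightarrow> bool" where
  "blk_inv_of N C P \<longleftrightarrow>
     (\<forall>i\<le>N. \<forall>k\<le>N. (\<Sum>j\<le>N. C i j ** P j k) = (if i = k then mat 1 else 0)) \<and>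
     (\<forall>i\<le>N. \<forall>k\<le>N. (\<Sum>j\<le>N. P i j ** C j k) = (if i = k then mat 1 else 0))"

text \<open>The inverse C^{-1} of the (N+1)d x (N+1)d block matrix C (meaningful when C is nonsingular).\<close>
definition blk_inv :: "nat \<Rightarrow> (nat \<Rightarrow> nat \<Rightarrow> real^'d^'d) \<Rightarrow> (nat \<Rightarrow> nat \<Rightarrow> real^'d^'d)" where
  "blk_inv N C = (SOME P. blk_inv_of N C P)"

definition nonsingular_blk :: "nat \<Rightarrow> (nat \<Rightarrow> nat \<Rightarrow> real^'d^'d) \<Rightarrow> bool" where
  "nonsingular_blk N C \<longleftrightarrow> (\<exists>P. blk_inv_of N C P)"

definition cov_matrix :: "real^'d^'d \<Rightarrow> bool" where
  "cov_matrix S \<longleftrightarrow> transpose S = S \<and> (\<forall>v. 0 \<le> v \<bullet> (S *v v))"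

text \<open>State transition products: trans_prod Mt k j = M_{k,k-1} ... M_{j+1,j} for j < k,
  identity for k \<le> j.\<close>
fun trans_prod :: "(nat \<Rightarrow> real^'d^'d) \<Rightarrow> nat \<Rightarrow> nat \<Rightarrow> real^'d^'d" where
  "trans_prod Mt 0 j = mat 1"
| "trans_prod Mt (Suc k) j = (if Suc k \<le> j then mat 1 else Mt (Suc k) ** trans_prod Mt k j)"

text \<open>Covariance C of the sequence generated by the Markov model
  x_k = M_{k,k-1} x_{k-1} + e_k (k \<ge> 1), x_0 = e_0, with white noise Cov(e_k) = M_k:
  Cov(x_i, x_k) = sum_{j \<le> min i k} Phi(i,j) M_j Phi(k,j)'.
  Mt k = M_{k,k-1}, Mc k = M_k.\<close>
definition markov_cov :: "(nat \<Rightarrow> real^'d^'d) \<Rightarrow> (nat \<Rightarrow> real^'d^'d) \<Rightarrow> nat \<Rightarrow> nat \<Rightarrow> real^'d^'d" where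
  "markov_cov Mt Mc i k = (\<Sum>j\<le>min i k. trans_prod Mt i j ** Mc j ** transpose (trans_prod Mt k j))"

definition blkA :: "nat \<Rightarrow> (nat \<Rightarrow> nat \<Rightarrow> real^'d^'d) \<Rightarrow> nat \<Rightarrow> real^'d^'d" where
  "blkA N C k = blk_inv N C k k"
definition blkB :: "nat \<Rightarrow> (nat \<Rightarrow> nat \<Rightarrow> real^'d^'d) \<Rightarrow> nat \<Rightarrow> real^'d^'d" where
  "blkB N C k = blk_inv N C k (Suc k)"
definition blkD0 :: "nat \<Rightarrow> (nat \<Rightarrow> nat \<Rightarrow> real^'d^'d) \<Rightarrow> real^'d^'d" where
  "blkD0 N C = blk_inv N C 0 N"

text \<open>Coefficients of the reciprocal model with first-type boundary condition.\<close>
definition R0 :: "nat \<Rightarrow> (nat \<Rightarrow> nat \<Rightarrow> real^'d^'d) \<Rightarrow> nat \<Rightarrow> real^'d^'d" where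
  "R0 N C k = blkA N C k"
definition Rplus :: "nat \<Rightarrow> (nat \<Rightarrow> nat \<Rightarrow> real^'d^'d) \<Rightarrow> nat \<Rightarrow> real^'d^'d" where
  "Rplus N C k = (if k = N then transpose (- blkD0 N C) else - blkB N C k)"
definition Rminus :: "nat \<Rightarrow> (nat \<Rightarrow> nat \<Rightarrow> real^'d^'d) \<Rightarrow> nat \<Rightarrow> real^'d^'d" where
  "Rminus N C k = (if k = 0 then - blkD0 N C else transpose (Rplus N C (k - 1)))"

definition same_reciprocal_model :: "nat \<Rightarrow> (nat \<Rightarrow> nat \<Rightarrow> real^'d^'d) \<Rightarrow> (nat \<Rightarrow> nat \<Rightarrow> real^'d^'d) \<Rightarrow> bool" where
  "same_reciprocal_model N C1 C2 \<longleftrightarrow>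
     (\<forall>k\<in>{1..N-1}. R0 N C1 k = R0 N C2 k \<and> Rminus N C1 k = Rminus N C2 k \<and> Rplus N C1 k = Rplus N C2 k)"

definition same_markov_model :: "nat \<Rightarrow> (nat \<Rightarrow> real^'d^'d) \<Rightarrow> (nat \<Rightarrow> real^'d^'d) \<Rightarrow> (nat \<Rightarrow> real^'d^'d) \<Rightarrow> (nat \<Rightarrow> real^'d^'d) \<Rightarrow> bool" where
  "same_markov_model N Mt1 Mc1 Mt2 Mc2 \<longleftrightarrow> (\<forall>k\<in>{1..N}. Mt1 k = Mt2 k \<and> Mc1 k = Mc2 k)"

end

theory Submission
  imports Defs
begin

text \<open>Writing L for the block lower-triangular matrix of transition products
  (so that x = L e), the covariance factors as C = L D L' with D = diag(M_0, ..., M_N).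
  The inverse K = L^{-1} is block bidiagonal (e_k = x_k - M_{k,k-1} x_{k-1}), hence
  C^{-1} = K' D^{-1} K, which gives
  A_N = M_N^{-1}, B_k = -M_{k+1,k}' M_{k+1}^{-1} and
  A_k = M_k^{-1} + M_{k+1,k}' M_{k+1}^{-1} M_{k+1,k}.
  The reciprocal model fixes A_1, ..., A_{N-1} and B_0, ..., B_{N-1}, and A_N = M_N^{-1}.
  Once M_N is known, B_{N-1} determines M_{N,N-1}, then A_{N-1} determines M_{N-1},
  and so on down to k = 1.\<close>

lemma matrix_mul_sum_right: "sum f S ** (B::'a::comm_ring_1^'n^'m) = (\<Sum>j\<in>S. f j ** B)"
  by (induction S rule: infinite_finite_induct)
     (auto simp: vec_eq_iff matrix_matrix_mult_def sum.distrib distrib_right)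

lemma matrix_mul_sum_left: "(A::'a::comm_ring_1^'n^'m) ** sum f S = (\<Sum>j\<in>S. A ** f j)"
  by (induction S rule: infinite_finite_induct)
     (auto simp: vec_eq_iff matrix_matrix_mult_def sum.distrib distrib_left)

lemma matrix_mul_uminus_left: "(- A) ** (B::'a::comm_ring_1^'n^'m) = - (A ** B)"
  by (auto simp: vec_eq_iff matrix_matrix_mult_def sum_negf)

lemma matrix_mul_uminus_right: "(A::'a::comm_ring_1^'n^'m) ** (- B) = - (A ** B)"
  by (auto simp: vec_eq_iff matrix_matrix_mult_def sum_negf)

lemma transpose_uminus: "transpose (- A) = - transpose (A::'a::comm_ring_1^'n^'m)"
  by (auto simp: vec_eq_iff transpose_def)

lemma transpose_zero [simp]: "transpose (0::'a::comm_ring_1^'n^'m) = 0"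
  by (auto simp: vec_eq_iff transpose_def)

lemma transpose_sum: "transpose (sum f S) = (\<Sum>j\<in>S. transpose (f j :: 'a::comm_ring_1^'n^'m))"
  by (induction S rule: infinite_finite_induct) (auto simp: vec_eq_iff transpose_def)

lemma matrix_inv_right:
  fixes A :: "'a::field^'n^'n"
  assumes "invertible A"
  shows "A ** matrix_inv A = mat 1"
  using someI_ex[OF assms[unfolded invertible_def]] by (simp add: matrix_inv_def)

lemma matrix_inv_left:
  fixes A :: "'a::field^'n^'n"
  assumes "invertible A"
  shows "matrix_inv A ** A = mat 1"
  by (rule matrix_left_right_inverse1[OF matrix_inv_right[OF assms]])

lemma invertible_matrix_inv:
  fixes A :: "'a::field^'n^'n"
  assumes "invertible A"
  shows "invertible (matrix_inv A)"
  unfolding invertible_def using matrix_inv_left[OF assms] matrix_inv_right[OF assms] by blast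

lemma matrix_mul_right_cancel:
  fixes M :: "'a::field^'n^'n"
  assumes "invertible M" and "X ** M = Y ** M"
  shows "X = Y"
proof -
  have "X = X ** M ** matrix_inv M" and "Y = Y ** M ** matrix_inv M"
    by (simp_all add: matrix_mul_assoc[symmetric] matrix_inv_right[OF assms(1)])
  then show ?thesis
    using assms(2) by simp
qed

lemma matrix_inv_inj:
  fixes A B :: "'a::field^'n^'n"
  assumes "invertible A" "invertible B" and "matrix_inv A = matrix_inv B"
  shows "A = B"
proof (rule matrix_mul_right_cancel[OF invertible_matrix_inv[OF assms(1)]])
  show "A ** matrix_inv A = B ** matrix_inv A"
    using matrix_inv_right[OF assms(1)] matrix_inv_right[OF assms(2)] assms(3) by simp
qed

type_synonym 'd blkmat = "nat \<Rightarrow> nat \<Rightarrow> real^'d^'d"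

definition blk_mult :: "nat \<Rightarrow> ('d::finite) blkmat \<Rightarrow> 'd blkmat \<Rightarrow> 'd blkmat" where
  "blk_mult N X Y i k = (\<Sum>j\<le>N. X i j ** Y j k)"

definition blk_transpose :: "('d::finite) blkmat \<Rightarrow> 'd blkmat" where
  "blk_transpose X i k = transpose (X k i)"

definition blk_id :: "('d::finite) blkmat" where
  "blk_id i k = (if i = k then mat 1 else 0)"

definition blk_diag :: "(nat \<Rightarrow> real^('d::finite)^'d) \<Rightarrow> 'd blkmat" where
  "blk_diag F i k = (if i = k then F i else 0)"

text \<open>Block matrices of size N+1 only have meaningful entries on [0,N]^2, so they are
  compared there.\<close>
definition blk_eq :: "nat \<Rightarrow> ('d::finite) blkmat \<Rightarrow> 'd blkmat \<Rightarrow> bool" where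
  "blk_eq N X Y \<longleftrightarrow> (\<forall>i\<le>N. \<forall>k\<le>N. X i k = Y i k)"

lemma blk_eq_refl [simp]: "blk_eq N X X"
  by (simp add: blk_eq_def)

lemma blk_eq_sym: "blk_eq N X Y \<Longrightarrow> blk_eq N Y X"
  by (simp add: blk_eq_def)

lemma blk_eq_trans [trans]: "blk_eq N X Y \<Longrightarrow> blk_eq N Y Z \<Longrightarrow> blk_eq N X Z"
  by (simp add: blk_eq_def)

lemma blk_eq_transpose: "blk_eq N X Y \<Longrightarrow> blk_eq N (blk_transpose X) (blk_transpose Y)"
  by (simp add: blk_eq_def blk_transpose_def)

lemma blk_mult_cong:
  "blk_eq N X X' \<Longrightarrow> blk_eq N Y Y' \<Longrightarrow> blk_eq N (blk_mult N X Y) (blk_mult N X' Y')"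
  by (simp add: blk_eq_def blk_mult_def)

lemma blk_mult_assoc: "blk_mult N (blk_mult N X Y) Z = blk_mult N X (blk_mult N Y Z)"
proof (intro ext)
  fix i k
  have "blk_mult N (blk_mult N X Y) Z i k = (\<Sum>j\<le>N. \<Sum>a\<le>N. X i a ** Y a j ** Z j k)"
    by (simp add: blk_mult_def matrix_mul_sum_right)
  also have "\<dots> = (\<Sum>a\<le>N. \<Sum>j\<le>N. X i a ** Y a j ** Z j k)"
    by (rule sum.swap)
  also have "\<dots> = blk_mult N X (blk_mult N Y Z) i k"
    by (simp add: blk_mult_def matrix_mul_sum_left matrix_mul_assoc)
  finally show "blk_mult N (blk_mult N X Y) Z i k = blk_mult N X (blk_mult N Y Z) i k" .
qed

lemma blk_transpose_mult:
  "blk_transpose (blk_mult N X Y) = blk_mult N (blk_transpose Y) (blk_transpose X)"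
  by (intro ext) (simp add: blk_transpose_def blk_mult_def transpose_sum matrix_transpose_mul)

lemma blk_transpose_id [simp]: "blk_transpose blk_id = blk_id"
  by (intro ext) (simp add: blk_transpose_def blk_id_def)

lemma blk_mult_id_left: "blk_eq N (blk_mult N blk_id Y) Y"
  by (simp add: blk_eq_def blk_mult_def blk_id_def if_distrib if_distribR cong: if_cong)

lemma blk_mult_id_right: "blk_eq N (blk_mult N Y blk_id) Y"
  by (simp add: blk_eq_def blk_mult_def blk_id_def if_distrib if_distribR cong: if_cong)

lemma blk_mult_inverse_cancel:
  assumes "blk_eq N (blk_mult N X Y) blk_id"
  shows "blk_eq N (blk_mult N X (blk_mult N Y Z)) Z"
proof -
  have "blk_eq N (blk_mult N (blk_mult N X Y) Z) (blk_mult N blk_id Z)"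
    by (rule blk_mult_cong[OF assms blk_eq_refl])
  then show ?thesis
    unfolding blk_mult_assoc using blk_mult_id_left by (rule blk_eq_trans)
qed

lemma blk_transpose_inverse:
  assumes "blk_eq N (blk_mult N X Y) blk_id"
  shows "blk_eq N (blk_mult N (blk_transpose Y) (blk_transpose X)) blk_id"
  using blk_eq_transpose[OF assms] by (simp only: blk_transpose_mult blk_transpose_id)

lemma blk_inverse_unique:
  assumes "blk_eq N (blk_mult N Q C) blk_id" and "blk_eq N (blk_mult N C P) blk_id"
  shows "blk_eq N Q P"
proof -
  have "blk_eq N Q (blk_mult N Q blk_id)"
    by (rule blk_eq_sym[OF blk_mult_id_right])
  also have "blk_eq N \<dots> (blk_mult N Q (blk_mult N C P))"
    by (rule blk_mult_cong[OF blk_eq_refl blk_eq_sym[OF assms(2)]])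
  also have "blk_eq N \<dots> (blk_mult N (blk_mult N Q C) P)"
    by (simp only: blk_mult_assoc blk_eq_refl)
  also have "blk_eq N \<dots> (blk_mult N blk_id P)"
    by (rule blk_mult_cong[OF assms(1) blk_eq_refl])
  also have "blk_eq N \<dots> P"
    by (rule blk_mult_id_left)
  finally show ?thesis .
qed

lemma blk_inv_of_iff:
  "blk_inv_of N C P \<longleftrightarrow>
     blk_eq N (blk_mult N C P) blk_id \<and> blk_eq N (blk_mult N P C) blk_id"
  by (simp add: blk_inv_of_def blk_eq_def blk_mult_def blk_id_def)

lemma blk_inv_of_blk_inv:
  assumes "nonsingular_blk N C"
  shows "blk_inv_of N C (blk_inv N C)"
  using assms unfolding nonsingular_blk_def blk_inv_def by (rule someI_ex)

lemma blk_mult_diag_left: "i \<le> N \<Longrightarrow> blk_mult N (blk_diag F) Y i k = F i ** Y i k"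
  by (simp add: blk_mult_def blk_diag_def if_distrib if_distribR cong: if_cong)

lemma blk_mult_diag_middle:
  "blk_mult N X (blk_mult N (blk_diag F) Y) i k = (\<Sum>a\<le>N. X i a ** F a ** Y a k)"
  by (simp add: blk_mult_def blk_diag_def matrix_mul_assoc if_distrib if_distribR cong: if_cong)

lemma blk_diag_inverse:
  assumes "\<And>k. k \<le> N \<Longrightarrow> F k ** G k = mat 1"
  shows "blk_eq N (blk_mult N (blk_diag F) (blk_diag G)) blk_id"
  using assms by (simp add: blk_eq_def blk_mult_diag_left blk_diag_def blk_id_def)

subsection \<open>The block factorization of a Markov covariance\<close>

lemma trans_prod_id: "k \<le> j \<Longrightarrow> trans_prod Mt k j = mat 1"
  by (cases k) auto

lemma trans_prod_split_right:
  "k < i \<Longrightarrow> trans_prod Mt i k = trans_prod Mt i (Suc k) ** Mt (Suc k)"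
proof (induction i)
  case 0
  then show ?case by simp
next
  case (Suc m)
  show ?case
  proof (cases "k = m")
    case True
    then show ?thesis by (simp add: trans_prod_id)
  next
    case False
    then show ?thesis using Suc by (simp add: matrix_mul_assoc)
  qed
qed

text \<open>The matrices L and K = L^{-1} of the proof idea.\<close>

definition transition_blk :: "(nat \<Rightarrow> real^('d::finite)^'d) \<Rightarrow> 'd blkmat" where
  "transition_blk Mt i j = (if j \<le> i then trans_prod Mt i j else 0)"

definition innovation_blk :: "(nat \<Rightarrow> real^('d::finite)^'d) \<Rightarrow> 'd blkmat" where
  "innovation_blk Mt i j = (if i = j then mat 1 else if i = Suc j then - Mt i else 0)"

lemma innovation_transition_inverse:
  "blk_eq N (blk_mult N (innovation_blk Mt) (transition_blk Mt)) blk_id"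
  unfolding blk_eq_def
proof (intro allI impI)
  fix i k assume "i \<le> N" "k \<le> N"
  show "blk_mult N (innovation_blk Mt) (transition_blk Mt) i k = blk_id i k"
  proof (cases i)
    case 0
    have "blk_mult N (innovation_blk Mt) (transition_blk Mt) i k
        = (\<Sum>j\<in>{0}. innovation_blk Mt i j ** transition_blk Mt j k)"
      unfolding blk_mult_def
      by (rule sum.mono_neutral_right) (auto simp: innovation_blk_def 0)
    then show ?thesis by (simp add: 0 innovation_blk_def transition_blk_def blk_id_def)
  next
    case (Suc m)
    have "blk_mult N (innovation_blk Mt) (transition_blk Mt) i k
        = (\<Sum>j\<in>{m, Suc m}. innovation_blk Mt i j ** transition_blk Mt j k)"
      unfolding blk_mult_def
      by (rule sum.mono_neutral_right) (use \<open>i \<le> N\<close> in \<open>auto simp: innovation_blk_def Suc\<close>)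
    also have "\<dots> = transition_blk Mt (Suc m) k - Mt (Suc m) ** transition_blk Mt m k"
      by (simp add: innovation_blk_def Suc matrix_mul_uminus_left)
    also have "\<dots> = blk_id i k"
      by (cases "k \<le> m"; cases "k = Suc m")
         (auto simp: transition_blk_def blk_id_def Suc trans_prod_id)
    finally show ?thesis .
  qed
qed

lemma transition_innovation_inverse:
  "blk_eq N (blk_mult N (transition_blk Mt) (innovation_blk Mt)) blk_id"
  unfolding blk_eq_def
proof (intro allI impI)
  fix i k assume "i \<le> N" "k \<le> N"
  show "blk_mult N (transition_blk Mt) (innovation_blk Mt) i k = blk_id i k"
  proof (cases "k = N")
    case True
    have "blk_mult N (transition_blk Mt) (innovation_blk Mt) i k
        = (\<Sum>j\<in>{k}. transition_blk Mt i j ** innovation_blk Mt j k)"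
      unfolding blk_mult_def
      by (rule sum.mono_neutral_right) (use True in \<open>auto simp: innovation_blk_def\<close>)
    then show ?thesis
      using \<open>i \<le> N\<close> True by (simp add: innovation_blk_def transition_blk_def blk_id_def trans_prod_id)
  next
    case False
    have "blk_mult N (transition_blk Mt) (innovation_blk Mt) i k
        = (\<Sum>j\<in>{k, Suc k}. transition_blk Mt i j ** innovation_blk Mt j k)"
      unfolding blk_mult_def
      by (rule sum.mono_neutral_right) (use \<open>k \<le> N\<close> False in \<open>auto simp: innovation_blk_def\<close>)
    also have "\<dots> = transition_blk Mt i k - transition_blk Mt i (Suc k) ** Mt (Suc k)"
      by (simp add: innovation_blk_def matrix_mul_uminus_right)
    also have "\<dots> = blk_id i k"
      by (cases "k < i"; cases "k = i")
         (auto simp: transition_blk_def blk_id_def trans_prod_id trans_prod_split_right[of k i])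
    finally show ?thesis .
  qed
qed

lemma markov_cov_factorization:
  "blk_eq N (markov_cov Mt Mc)
     (blk_mult N (transition_blk Mt) (blk_mult N (blk_diag Mc) (blk_transpose (transition_blk Mt))))"
  (is "blk_eq N ?C ?F")
  unfolding blk_eq_def
proof (intro allI impI)
  fix i k assume "i \<le> N" "k \<le> N"
  have "?C i k = (\<Sum>j\<le>min i k. transition_blk Mt i j ** Mc j ** transpose (transition_blk Mt k j))"
    unfolding markov_cov_def by (rule sum.cong) (auto simp: transition_blk_def)
  also have "\<dots> = (\<Sum>j\<le>N. transition_blk Mt i j ** Mc j ** transpose (transition_blk Mt k j))"
    by (rule sum.mono_neutral_left) (use \<open>i \<le> N\<close> in \<open>auto simp: transition_blk_def\<close>)
  also have "\<dots> = ?F i k"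
    by (simp add: blk_mult_diag_middle blk_transpose_def)
  finally show "?C i k = ?F i k" .
qed

lemma innovation_markov_cov:
  "blk_eq N (blk_mult N (innovation_blk Mt) (markov_cov Mt Mc))
     (blk_mult N (blk_diag Mc) (blk_transpose (transition_blk Mt)))"
proof -
  have "blk_eq N (blk_mult N (innovation_blk Mt) (markov_cov Mt Mc))
          (blk_mult N (innovation_blk Mt) (blk_mult N (transition_blk Mt)
            (blk_mult N (blk_diag Mc) (blk_transpose (transition_blk Mt)))))"
    by (rule blk_mult_cong[OF blk_eq_refl markov_cov_factorization])
  also have "blk_eq N \<dots> (blk_mult N (blk_diag Mc) (blk_transpose (transition_blk Mt)))"
    by (rule blk_mult_inverse_cancel[OF innovation_transition_inverse])
  finally show ?thesis .
qed

subsection \<open>The inverse of a Markov covariance\<close>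

lemma noise_cov_invertible:
  assumes "nonsingular_blk N (markov_cov Mt Mc)" and "k \<le> N"
  shows "invertible (Mc k)"
proof -
  define C where "C = markov_cov Mt Mc"
  define L where "L = transition_blk Mt"
  define K where "K = innovation_blk Mt"
  have CP: "blk_eq N (blk_mult N C (blk_inv N C)) blk_id"
    using blk_inv_of_blk_inv[OF assms(1)] by (simp add: blk_inv_of_iff C_def)
  have KC: "blk_eq N (blk_mult N (blk_diag Mc) (blk_transpose L)) (blk_mult N K C)"
    unfolding K_def L_def C_def by (rule blk_eq_sym[OF innovation_markov_cov])
  \<comment> \<open>diag(M_0, ..., M_N) has the right inverse L' C^{-1} L.\<close>
  have "blk_eq N (blk_mult N (blk_diag Mc) (blk_mult N (blk_transpose L) (blk_mult N (blk_inv N C) L)))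
      (blk_mult N (blk_mult N (blk_diag Mc) (blk_transpose L)) (blk_mult N (blk_inv N C) L))"
    by (simp only: blk_mult_assoc blk_eq_refl)
  also have "blk_eq N \<dots> (blk_mult N (blk_mult N K C) (blk_mult N (blk_inv N C) L))"
    by (rule blk_mult_cong[OF KC blk_eq_refl])
  also have "blk_eq N \<dots> (blk_mult N K (blk_mult N C (blk_mult N (blk_inv N C) L)))"
    by (simp only: blk_mult_assoc blk_eq_refl)
  also have "blk_eq N \<dots> (blk_mult N K L)"
    by (rule blk_mult_cong[OF blk_eq_refl blk_mult_inverse_cancel[OF CP]])
  also have "blk_eq N \<dots> blk_id"
    unfolding K_def L_def by (rule innovation_transition_inverse)
  finally have "Mc k ** blk_mult N (blk_transpose L) (blk_mult N (blk_inv N C) L) k k = mat 1"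
    using assms(2) by (simp add: blk_eq_def blk_mult_diag_left blk_id_def)
  then show ?thesis
    unfolding invertible_right_inverse by (rule exI)
qed

lemma blk_inv_markov_cov:
  assumes "nonsingular_blk N (markov_cov Mt Mc)"
  shows "blk_eq N (blk_inv N (markov_cov Mt Mc))
           (blk_mult N (blk_transpose (innovation_blk Mt))
             (blk_mult N (blk_diag (\<lambda>k. matrix_inv (Mc k))) (innovation_blk Mt)))"
proof -
  define C where "C = markov_cov Mt Mc"
  define L where "L = transition_blk Mt"
  define K where "K = innovation_blk Mt"
  define Dinv where "Dinv = blk_diag (\<lambda>k. matrix_inv (Mc k))"
  have CP: "blk_eq N (blk_mult N C (blk_inv N C)) blk_id"
    using blk_inv_of_blk_inv[OF assms] by (simp add: blk_inv_of_iff C_def)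
  have DinvD: "blk_eq N (blk_mult N Dinv (blk_diag Mc)) blk_id"
    unfolding Dinv_def
    by (rule blk_diag_inverse) (simp add: matrix_inv_left noise_cov_invertible[OF assms])
  have "blk_eq N (blk_mult N (blk_mult N (blk_transpose K) (blk_mult N Dinv K)) C)
      (blk_mult N (blk_transpose K) (blk_mult N Dinv (blk_mult N K C)))"
    by (simp only: blk_mult_assoc blk_eq_refl)
  also have "blk_eq N \<dots>
      (blk_mult N (blk_transpose K) (blk_mult N Dinv (blk_mult N (blk_diag Mc) (blk_transpose L))))"
    unfolding K_def C_def L_def
    by (intro blk_mult_cong[OF blk_eq_refl] innovation_markov_cov)
  also have "blk_eq N \<dots> (blk_mult N (blk_transpose K) (blk_transpose L))"
    by (rule blk_mult_cong[OF blk_eq_refl blk_mult_inverse_cancel[OF DinvD]])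
  also have "blk_eq N \<dots> blk_id"
    unfolding K_def L_def by (rule blk_transpose_inverse[OF transition_innovation_inverse])
  finally show ?thesis
    unfolding K_def Dinv_def C_def by (rule blk_eq_sym[OF blk_inverse_unique[OF _ CP[unfolded C_def]]])
qed

lemma blk_inv_markov_cov_entry:
  assumes "nonsingular_blk N (markov_cov Mt Mc)" and "i \<le> N" "k \<le> N"
  shows "blk_inv N (markov_cov Mt Mc) i k
       = (\<Sum>a\<le>N. transpose (innovation_blk Mt a i) ** matrix_inv (Mc a) ** innovation_blk Mt a k)"
  using blk_inv_markov_cov[OF assms(1)] assms(2,3)
  by (simp add: blk_eq_def blk_mult_diag_middle blk_transpose_def)

lemma blk_inv_markov_cov_last:
  assumes "nonsingular_blk N (markov_cov Mt Mc)"
  shows "blk_inv N (markov_cov Mt Mc) N N = matrix_inv (Mc N)"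
proof -
  have "blk_inv N (markov_cov Mt Mc) N N
      = (\<Sum>a\<in>{N}. transpose (innovation_blk Mt a N) ** matrix_inv (Mc a) ** innovation_blk Mt a N)"
    unfolding blk_inv_markov_cov_entry[OF assms order_refl order_refl]
    by (rule sum.mono_neutral_right) (auto simp: innovation_blk_def)
  then show ?thesis
    by (simp add: innovation_blk_def)
qed

lemma blk_inv_markov_cov_super:
  assumes "nonsingular_blk N (markov_cov Mt Mc)" and "k < N"
  shows "blk_inv N (markov_cov Mt Mc) k (Suc k) = - (transpose (Mt (Suc k)) ** matrix_inv (Mc (Suc k)))"
proof -
  have "blk_inv N (markov_cov Mt Mc) k (Suc k)
      = (\<Sum>a\<in>{Suc k}. transpose (innovation_blk Mt a k) ** matrix_inv (Mc a) ** innovation_blk Mt a (Suc k))"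
    unfolding blk_inv_markov_cov_entry[OF assms(1) less_imp_le[OF assms(2)] Suc_leI[OF assms(2)]]
    by (rule sum.mono_neutral_right) (use assms(2) in \<open>auto simp: innovation_blk_def\<close>)
  then show ?thesis
    by (simp add: innovation_blk_def transpose_uminus matrix_mul_uminus_left)
qed

lemma blk_inv_markov_cov_diag:
  assumes "nonsingular_blk N (markov_cov Mt Mc)" and "k < N"
  shows "blk_inv N (markov_cov Mt Mc) k k
       = matrix_inv (Mc k) + transpose (Mt (Suc k)) ** matrix_inv (Mc (Suc k)) ** Mt (Suc k)"
proof -
  have "blk_inv N (markov_cov Mt Mc) k k
      = (\<Sum>a\<in>{k, Suc k}. transpose (innovation_blk Mt a k) ** matrix_inv (Mc a) ** innovation_blk Mt a k)"
    unfolding blk_inv_markov_cov_entry[OF assms(1) less_imp_le[OF assms(2)] less_imp_le[OF assms(2)]]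
    by (rule sum.mono_neutral_right) (use assms(2) in \<open>auto simp: innovation_blk_def\<close>)
  then show ?thesis
    by (simp add: innovation_blk_def transpose_uminus matrix_mul_uminus_left matrix_mul_uminus_right)
qed

subsection \<open>Recovering the Markov model from the reciprocal one\<close>

lemma same_reciprocal_model_blkA:
  assumes "same_reciprocal_model N C1 C2" and "1 \<le> k" "k < N"
  shows "blkA N C1 k = blkA N C2 k"
  using assms by (simp add: same_reciprocal_model_def R0_def)

lemma same_reciprocal_model_blkB:
  assumes "N \<ge> 2" and "same_reciprocal_model N C1 C2" and "k < N"
  shows "blkB N C1 k = blkB N C2 k"
proof (cases k)
  case 0
  \<comment> \<open>B_0 only enters through R^-_1 = (R^+_0)'.\<close>
  have "Rminus N C1 1 = Rminus N C2 1"
    using assms(1,2) by (simp add: same_reciprocal_model_def)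
  then show ?thesis
    using assms(1) 0 by (simp add: Rminus_def Rplus_def transpose_uminus)
next
  case (Suc m)
  have "Rplus N C1 k = Rplus N C2 k"
    using assms Suc by (simp add: same_reciprocal_model_def)
  then show ?thesis
    using assms(3) by (simp add: Rplus_def)
qed

lemma same_markov_model_downward:
  fixes Mt Mc Mt' Mc' :: "nat \<Rightarrow> real^'d^'d"
  assumes inv: "\<And>k. k \<le> N \<Longrightarrow> invertible (Mc k)"
    and inv': "\<And>k. k \<le> N \<Longrightarrow> invertible (Mc' k)"
    and super: "\<And>k. k < N \<Longrightarrow>
      transpose (Mt (Suc k)) ** matrix_inv (Mc (Suc k))
      = transpose (Mt' (Suc k)) ** matrix_inv (Mc' (Suc k))"
    and diag: "\<And>k. 1 \<le> k \<Longrightarrow> k < N \<Longrightarrow>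
      matrix_inv (Mc k) + transpose (Mt (Suc k)) ** matrix_inv (Mc (Suc k)) ** Mt (Suc k)
      = matrix_inv (Mc' k) + transpose (Mt' (Suc k)) ** matrix_inv (Mc' (Suc k)) ** Mt' (Suc k)"
    and last: "Mc N = Mc' N"
  shows "same_markov_model N Mt Mc Mt' Mc'"
proof -
  have Mt_eq: "Mt (Suc k) = Mt' (Suc k)" if "k < N" and "Mc (Suc k) = Mc' (Suc k)" for k
  proof -
    have "transpose (Mt (Suc k)) ** matrix_inv (Mc (Suc k))
        = transpose (Mt' (Suc k)) ** matrix_inv (Mc (Suc k))"
      using super[OF that(1)] that(2) by simp
    then have "transpose (Mt (Suc k)) = transpose (Mt' (Suc k))"
      by (rule matrix_mul_right_cancel[OF invertible_matrix_inv[OF inv[OF Suc_leI[OF that(1)]]]])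
    then show ?thesis
      by simp
  qed
  have Mc_eq: "Mc k = Mc' k" if "1 \<le> k" "k \<le> N" for k
    using that(2)
  proof (induction rule: inc_induct)
    case base
    show ?case by (rule last)
  next
    case (step n)
    then have "matrix_inv (Mc n) = matrix_inv (Mc' n)"
      using diag[of n] Mt_eq[of n] that(1) by simp
    then show ?case
      using matrix_inv_inj[OF inv[of n] inv'[of n]] step(2) by simp
  qed
  show ?thesis
    unfolding same_markov_model_def
  proof
    fix k assume "k \<in> {1..N}"
    then obtain m where "k = Suc m" "m < N"
      by (cases k) auto
    then show "Mt k = Mt' k \<and> Mc k = Mc' k"
      using Mt_eq Mc_eq by simp
  qed
qed

lemma same_markov_model_iff_last_noise_cov:
  fixes Mt1 Mc1 Mt2 Mc2 :: "nat \<Rightarrow> real^'d^'d"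
  assumes "N \<ge> 2"
    and ns1: "nonsingular_blk N (markov_cov Mt1 Mc1)"
    and ns2: "nonsingular_blk N (markov_cov Mt2 Mc2)"
    and rec: "same_reciprocal_model N (markov_cov Mt1 Mc1) (markov_cov Mt2 Mc2)"
  shows "same_markov_model N Mt1 Mc1 Mt2 Mc2 \<longleftrightarrow> Mc1 N = Mc2 N"
proof
  assume "same_markov_model N Mt1 Mc1 Mt2 Mc2"
  then show "Mc1 N = Mc2 N"
    using assms(1) by (simp add: same_markov_model_def)
next
  assume last: "Mc1 N = Mc2 N"
  have super: "transpose (Mt1 (Suc k)) ** matrix_inv (Mc1 (Suc k))
      = transpose (Mt2 (Suc k)) ** matrix_inv (Mc2 (Suc k))" if "k < N" for k
    using same_reciprocal_model_blkB[OF assms(1) rec that]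
    by (simp add: blkB_def blk_inv_markov_cov_super ns1 ns2 that)
  have diag: "matrix_inv (Mc1 k) + transpose (Mt1 (Suc k)) ** matrix_inv (Mc1 (Suc k)) ** Mt1 (Suc k)
      = matrix_inv (Mc2 k) + transpose (Mt2 (Suc k)) ** matrix_inv (Mc2 (Suc k)) ** Mt2 (Suc k)"
    if "1 \<le> k" "k < N" for k
    using same_reciprocal_model_blkA[OF rec that]
    by (simp add: blkA_def blk_inv_markov_cov_diag ns1 ns2 that)
  show "same_markov_model N Mt1 Mc1 Mt2 Mc2"
    using same_markov_model_downward[where Mt = Mt1 and Mc = Mc1 and Mt' = Mt2 and Mc' = Mc2,
        OF noise_cov_invertible[OF ns1] noise_cov_invertible[OF ns2] super diag last] .
qed

lemma R0_last_markov_cov: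
  assumes "nonsingular_blk N (markov_cov Mt Mc)"
  shows "R0 N (markov_cov Mt Mc) N = matrix_inv (Mc N)"
  using blk_inv_markov_cov_last[OF assms] by (simp add: R0_def blkA_def)

theorem proposition6:
  fixes N :: nat
    and Mt1 Mc1 Mt2 Mc2 :: "nat \<Rightarrow> real^'d^'d"
  assumes "N \<ge> 2"
    and "\<forall>k\<le>N. cov_matrix (Mc1 k)"
    and "\<forall>k\<le>N. cov_matrix (Mc2 k)"
    and "nonsingular_blk N (markov_cov Mt1 Mc1)"
    and "nonsingular_blk N (markov_cov Mt2 Mc2)"
    and "same_reciprocal_model N (markov_cov Mt1 Mc1) (markov_cov Mt2 Mc2)"
  shows "(same_markov_model N Mt1 Mc1 Mt2 Mc2
            \<longleftrightarrow> R0 N (markov_cov Mt1 Mc1) N = R0 N (markov_cov Mt2 Mc2) N)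
       \<and> (same_markov_model N Mt1 Mc1 Mt2 Mc2 \<longleftrightarrow> Mc1 N = Mc2 N)"
proof -
  have "R0 N (markov_cov Mt1 Mc1) N = R0 N (markov_cov Mt2 Mc2) N \<longleftrightarrow> Mc1 N = Mc2 N"
    using matrix_inv_inj[OF noise_cov_invertible[OF assms(4)] noise_cov_invertible[OF assms(5)]]
    by (auto simp: R0_last_markov_cov assms(4,5))
  then show ?thesis
    using same_markov_model_iff_last_noise_cov[OF assms(1,4,5,6)] by blast
qed

end
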